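(* Let $f\colon X\to Y$ be a perfect map between metrizable spaces, $d$ a compatible metric on $X$, and $(M,\varrho)$ a complete metric space. For every closed $H\subset Y$ and all $m,n\ge1$, the set $\mathcal{K}(m,n,H)$ is open in $C(X,M)$ with respect to the source limitation topology.
   Context: For $A\subset X$, $\delta>0$, $B(A,\delta)=\{x\in X:d(x,A)<\delta\}$. $C(x,g|f^{-1}(y))$ is the component of $g^{-1}(g(x))\cap f^{-1}(y)$ containing $x$. $\mathcal{K}(m,n,y)$ is the set of $g\in C(X,M)$ such that for every subcontinuum $L\subset f^{-1}(y)$ with $\operatorname{diam}g(L)\ge1/n$ there is $x\in L$ with $C(x,g|f^{-1}(y))\subset B(L,1/m)$; $\mathcal{K}(m,n,H)=\bigcap_{y\in H}\mathcal{K}(m,n,y)$. The source limitation topology on $C(X,M)$ has base at $g$ the sets $\{g':\varrho(g'(x),g(x))<\varepsilon(x)\ \forall x\}$ with $\varepsilon\colon X\to(0,1]$ continuous. *)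

theory Defs
  imports "HOL-Analysis.Analysis"
begin

text \<open>X, Y are metrizable spaces represented by metric-space types (their metric is
  a compatible metric); M is a complete metric space type. C(X,M) is the set of
  continuous maps.\<close>

definition cmaps :: "('a::topological_space \<Rightarrow> 'c::topological_space) set" where
  "cmaps = {g. continuous_on UNIV g}"

definition perfect_map :: "('a::topological_space \<Rightarrow> 'b::topological_space) \<Rightarrow> bool" where
  "perfect_map f \<longleftrightarrow> continuous_on UNIV f \<and> (\<forall>S. closed S \<longrightarrow> closed (f ` S))
     \<and> (\<forall>y. compact (f -` {y}))"

definition nbhd :: "'a::metric_space set \<Rightarrow> real \<Rightarrow> 'a set" where
  "nbhd A \<delta> = {x. infdist x A < \<delta>}"

definition comp_fib :: "'a::metric_space \<Rightarrow> ('a \<Rightarrow> 'c) \<Rightarrow> ('a \<Rightarrow> 'b) \<Rightarrow> 'b \<Rightarrow> 'a set" where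
  "comp_fib x g f y = connected_component_set (g -` {g x} \<inter> f -` {y}) x"

definition subcontinuum :: "'a::topological_space set \<Rightarrow> bool" where
  "subcontinuum L \<longleftrightarrow> L \<noteq> {} \<and> compact L \<and> connected L"

definition Kset :: "('a::metric_space \<Rightarrow> 'b) \<Rightarrow> nat \<Rightarrow> nat \<Rightarrow> 'b \<Rightarrow> ('a \<Rightarrow> 'c::metric_space) set" where
  "Kset f m n y = {g \<in> cmaps. \<forall>L. subcontinuum L \<and> L \<subseteq> f -` {y} \<and> diameter (g ` L) \<ge> 1 / real n
      \<longrightarrow> (\<exists>x\<in>L. comp_fib x g f y \<subseteq> nbhd L (1 / real m))}"

definition KsetH :: "('a::metric_space \<Rightarrow> 'b) \<Rightarrow> nat \<Rightarrow> nat \<Rightarrow> 'b set \<Rightarrow> ('a \<Rightarrow> 'c::metric_space) set" where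
  "KsetH f m n H = cmaps \<inter> (\<Inter>y\<in>H. Kset f m n y)"

definition sl_ball :: "('a::metric_space \<Rightarrow> 'c::metric_space) \<Rightarrow> ('a \<Rightarrow> real) \<Rightarrow> ('a \<Rightarrow> 'c) set" where
  "sl_ball g \<epsilon> = {g' \<in> cmaps. \<forall>x. dist (g' x) (g x) < \<epsilon> x}"

definition source_limitation_topology :: "('a::metric_space \<Rightarrow> 'c::metric_space) topology" where
  "source_limitation_topology = topology_generated_by
     {sl_ball g \<epsilon> | g \<epsilon>. g \<in> cmaps \<and> continuous_on UNIV \<epsilon> \<and> (\<forall>x. 0 < \<epsilon> x \<and> \<epsilon> x \<le> 1)}"

end

theory Submission
  imports Defs "HOL-Complex_Analysis.Great_Picard"
begin

text \<open>
  For \<open>g \<in> K(m,n,H)\<close> we construct a continuous radius function \<open>\<epsilon>\<close> on \<open>Y\<close> such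
  that every continuous \<open>g'\<close> with \<open>\<rho>(g' x, g x) < \<epsilon>(f x)\<close> again lies in \<open>K(m,n,H)\<close>; the
  source-limitation ball of radius \<open>\<epsilon> \<circ> f\<close> is then a basic neighbourhood of \<open>g\<close> inside the set.

  The heart is a local statement at a single point \<open>y0 \<in> H\<close>, proved by contradiction with
  sequences: bad maps \<open>G k \<rightarrow> g\<close> over fibres \<open>f\<^sup>-\<^sup>1(z k)\<close>, \<open>z k \<rightarrow> y0\<close>, come with bad continua
  \<open>LL k\<close>.  Since \<open>f\<close> is perfect, everything lives in a compact set, so the continua and the
  relevant components of level sets converge in the Hausdorff sense; the limits are a continuum
  \<open>L\<close> in \<open>f\<^sup>-\<^sup>1(y0)\<close> with \<open>diam g(L) \<ge> 1/n\<close> and a subset of a component of \<open>g\<close>, and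
  \<open>g \<in> K(m,n,y0)\<close> then forces the components of \<open>G k\<close> to stay near \<open>LL k\<close> for large \<open>k\<close>.
\<close>

lemma infdist_lessE:
  assumes "A \<noteq> {}" "infdist x A < e"
  obtains a where "a \<in> A" "dist x a < e"
  using assms by (auto simp: infdist_notempty cINF_less_iff intro: bdd_belowI[of _ 0])

lemma open_nbhd: "open (nbhd A \<delta>)"
  unfolding nbhd_def by (rule open_Collect_less) (auto intro!: continuous_intros)

lemma nbhd_trans:
  assumes "B \<subseteq> nbhd A a" "B \<noteq> {}"
  shows "nbhd B b \<subseteq> nbhd A (a + b)"
proof
  fix v assume "v \<in> nbhd B b"
  then obtain w where w: "w \<in> B" "dist v w < b"
    using infdist_lessE[OF \<open>B \<noteq> {}\<close>] unfolding nbhd_def by blast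
  have "infdist v A \<le> infdist w A + dist v w" by (rule infdist_triangle)
  also have "\<dots> < a + b" using w assms(1) unfolding nbhd_def by auto
  finally show "v \<in> nbhd A (a + b)" unfolding nbhd_def by simp
qed

lemma eventually_inverse_Suc_less:
  "(e::real) > 0 \<Longrightarrow> eventually (\<lambda>k. 1 / real (Suc k) < e) sequentially"
  using order_tendstoD(2)[OF LIMSEQ_inverse_real_of_nat] by (simp add: inverse_eq_divide)

lemma nbhd_Un:
  "A \<noteq> {} \<Longrightarrow> B \<noteq> {} \<Longrightarrow> nbhd (A \<union> B) \<delta> = nbhd A \<delta> \<union> nbhd B \<delta>"
  unfolding nbhd_def by (auto simp: infdist_Un_min)

lemma nbhd_meets:
  assumes "a \<in> nbhd S \<delta>" "S \<noteq> {}" "a \<in> A"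
  shows "S \<inter> nbhd A \<delta> \<noteq> {}"
proof -
  obtain q where "q \<in> S" "dist a q < \<delta>"
    using assms(1,2) infdist_lessE unfolding nbhd_def by blast
  then have "q \<in> nbhd A \<delta>"
    using infdist_le[OF assms(3), of q] unfolding nbhd_def by (simp add: dist_commute)
  then show ?thesis using \<open>q \<in> S\<close> by blast
qed

text \<open>A compact set inside \<open>B(L,\<rho>)\<close> already lies in a strictly smaller neighbourhood;
  this margin is what survives the limit process in the main argument.\<close>

lemma compact_nbhd_margin:
  assumes "compact C" "C \<subseteq> nbhd L \<rho>"
  obtains \<rho>' where "\<rho>' < \<rho>" "C \<subseteq> nbhd L \<rho>'"
proof (cases "C = {}")
  case True
  then show ?thesis using that[of "\<rho> - 1"] by simp
next
  case False
  have "continuous_on C (\<lambda>y. infdist y L)" by (intro continuous_intros)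
  then obtain c where "c \<in> C" "\<And>y. y \<in> C \<Longrightarrow> infdist y L \<le> infdist c L"
    using continuous_attains_sup[OF assms(1) False] by blast
  then show ?thesis
    using that[of "(infdist c L + \<rho>) / 2"] assms(2) unfolding nbhd_def by fastforce
qed

lemma equilipschitz_uniformly_Cauchy:
  fixes F :: "nat \<Rightarrow> 'a::metric_space \<Rightarrow> real"
  assumes lip: "\<And>n x y. x \<in> S \<Longrightarrow> y \<in> S \<Longrightarrow> \<bar>F n x - F n y\<bar> \<le> dist x y"
    and net: "\<And>i. finite (TT i)" "\<And>i. TT i \<subseteq> S" "\<And>i. S \<subseteq> (\<Union>c\<in>TT i. ball c (1 / Suc i))"
    and Cauchy: "\<And>x. x \<in> (\<Union>i. TT i) \<Longrightarrow> Cauchy (\<lambda>n. F n x)"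
    and "0 < e"
  shows "\<exists>N. \<forall>m n x. N \<le> m \<and> N \<le> n \<and> x \<in> S \<longrightarrow> dist (F m x) (F n x) < e"
proof -
  obtain i where i: "1 / Suc i < e/3"
    using \<open>0 < e\<close> by (metis divide_pos_pos nat_approx_posE of_nat_Suc zero_less_numeral)
  have "\<exists>N. \<forall>m\<ge>N. \<forall>n\<ge>N. dist (F m x) (F n x) < e/3" if "x \<in> TT i" for x
    using Cauchy[of x] that \<open>0 < e\<close> unfolding Cauchy_def by (meson UN_I UNIV_I divide_pos_pos zero_less_numeral)
  then obtain MF where MF: "\<And>x m n. \<lbrakk>x \<in> TT i; m \<ge> MF x; n \<ge> MF x\<rbrakk> \<Longrightarrow> dist (F m x) (F n x) < e/3"
    by metis
  have "dist (F m x) (F n x) < e"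
    if m: "Max (MF ` TT i) \<le> m" and n: "Max (MF ` TT i) \<le> n" and "x \<in> S" for m n x
  proof -
    obtain t where t: "t \<in> TT i" "dist t x < 1 / Suc i"
      using \<open>x \<in> S\<close> net(3)[of i] by auto
    have "MF t \<le> m" "MF t \<le> n"
      using Max_ge[OF finite_imageI[OF net(1)] imageI[OF t(1)], of MF] m n by linarith+
    then have "dist (F m t) (F n t) < e / 3" using MF t(1) by blast
    moreover have close: "\<bar>F j t - F j x\<bar> < e / 3" for j
      using lip[of t x j] net(2) t \<open>x \<in> S\<close> i by fastforce
    ultimately show ?thesis
      using close[of m] close[of n] unfolding dist_real_def by linarith
  qed
  then show ?thesis by blast
qed

text \<open>The diagonal argument on a countable dense set is
  taken from the library; the library version of the theorem itself is restricted to Euclidean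
  domains, whence this variant.\<close>

lemma equilipschitz_uniform_subsequence:
  fixes F :: "nat \<Rightarrow> 'a::metric_space \<Rightarrow> real"
  assumes "compact S"
      and bound: "\<And>n x. x \<in> S \<Longrightarrow> \<bar>F n x\<bar> \<le> M"
      and lip: "\<And>n x y. x \<in> S \<Longrightarrow> y \<in> S \<Longrightarrow> \<bar>F n x - F n y\<bar> \<le> dist x y"
  obtains k g where "strict_mono (k :: nat \<Rightarrow> nat)" "uniform_limit S (\<lambda>n. F (k n)) g sequentially"
proof -
  have "\<exists>T. T \<subseteq> S \<and> finite T \<and> S \<subseteq> (\<Union>c\<in>T. ball c (1 / Suc i))" for i
  proof (rule compactE_image [OF \<open>compact S\<close>, of S "\<lambda>x. ball x (1 / Suc i)"])
    show "S \<subseteq> (\<Union>c\<in>S. ball c (1 / Suc i))"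
      by (intro subsetI UN_I) auto
  qed auto
  then obtain TT where TT: "\<And>i. finite (TT i)" "\<And>i. TT i \<subseteq> S"
      "\<And>i. S \<subseteq> (\<Union>c\<in>TT i. ball c (1 / Suc i))"
    by metis
  define R where "R = (\<Union>i. TT i)"
  have "countable R" "R \<subseteq> S" unfolding R_def using TT by (auto simp: countable_finite)
  obtain k where "strict_mono k" and k: "\<And>x. x \<in> R \<Longrightarrow> \<exists>l. (\<lambda>n. F (k n) x) \<longlonglongrightarrow> l"
  proof (rule function_convergent_subsequence [OF \<open>countable R\<close>, of F M])
    show "norm (F n x) \<le> M" if "x \<in> R" for n x using that \<open>R \<subseteq> S\<close> bound by auto
  qed auto
  then have "Cauchy (\<lambda>n. F (k n) x)" if "x \<in> R" for x
    using convergent_eq_Cauchy that by blast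
  then have "\<exists>N. \<forall>m n x. N \<le> m \<and> N \<le> n \<and> x \<in> S \<longrightarrow> dist ((F \<circ> k) m x) ((F \<circ> k) n x) < e"
    if "0 < e" for e
    using equilipschitz_uniformly_Cauchy[of S "F \<circ> k" TT e] lip TT that unfolding R_def by simp
  then obtain g where "\<forall>e>0. \<exists>N. \<forall>n x. N \<le> n \<and> x \<in> S \<longrightarrow> dist ((F \<circ> k) n x) (g x) < e"
    using uniformly_convergent_eq_cauchy [of "\<lambda>x. x \<in> S" "F \<circ> k"] by blast
  then have "uniform_limit S (\<lambda>n. F (k n)) g sequentially"
    unfolding uniform_limit_sequentially_iff by (simp add: o_def) blast
  with \<open>strict_mono k\<close> show thesis using that by blast
qed

text \<open>Convergence of sets in the Hausdorff metric, phrased with neighbourhoods: eventually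
  \<open>S k \<subseteq> B(L,\<eta>)\<close> and \<open>L \<subseteq> B(S k,\<eta>)\<close>.\<close>

definition hausdorff_lim :: "(nat \<Rightarrow> 'a::metric_space set) \<Rightarrow> 'a set \<Rightarrow> bool" where
  "hausdorff_lim S L \<longleftrightarrow>
     (\<forall>\<eta>>0. eventually (\<lambda>k. S k \<subseteq> nbhd L \<eta> \<and> L \<subseteq> nbhd (S k) \<eta>) sequentially)"

lemma hausdorff_limD:
  assumes "hausdorff_lim S L" "\<eta> > 0"
  shows "eventually (\<lambda>k. S k \<subseteq> nbhd L \<eta>) sequentially"
    and "eventually (\<lambda>k. L \<subseteq> nbhd (S k) \<eta>) sequentially"
proof -
  have "eventually (\<lambda>k. S k \<subseteq> nbhd L \<eta> \<and> L \<subseteq> nbhd (S k) \<eta>) sequentially"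
    using assms unfolding hausdorff_lim_def by blast
  then show "eventually (\<lambda>k. S k \<subseteq> nbhd L \<eta>) sequentially"
    and "eventually (\<lambda>k. L \<subseteq> nbhd (S k) \<eta>) sequentially"
    by (auto elim: eventually_mono)
qed

lemma hausdorff_lim_subseq:
  "hausdorff_lim S L \<Longrightarrow> strict_mono r \<Longrightarrow> hausdorff_lim (S \<circ> r) L"
  unfolding hausdorff_lim_def o_def using eventually_subseq by blast

lemma hausdorff_lim_zero_set:
  fixes S :: "nat \<Rightarrow> 'a::metric_space set"
  assumes T: "compact T" and ST: "\<And>k. S k \<subseteq> T"
    and lim: "uniform_limit T (\<lambda>k x. infdist x (S k)) d sequentially"
    and dcont: "continuous_on T d" and dnn: "\<And>x. x \<in> T \<Longrightarrow> d x \<ge> 0"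
  shows "hausdorff_lim S {x \<in> T. d x = 0}"
  unfolding hausdorff_lim_def
proof (intro allI impI eventually_conj)
  fix \<eta> :: real assume "\<eta> > 0"
  define L where "L = {x \<in> T. d x = 0}"
  have unif: "\<forall>\<^sub>F k in sequentially. \<forall>x\<in>T. \<bar>infdist x (S k) - d x\<bar> < e" if "e > 0" for e
    using lim that unfolding uniform_limit_iff dist_real_def by blast
  show "\<forall>\<^sub>F k in sequentially. L \<subseteq> nbhd (S k) \<eta>"
    using unif[OF \<open>\<eta> > 0\<close>] unfolding L_def nbhd_def
    by (rule eventually_mono) (auto dest: bspec)
  text \<open>Points at distance at least \<open>\<eta>\<close> from \<open>L\<close> have \<open>d\<close> bounded below, so they are
    eventually far from \<open>S k\<close>.\<close>
  define T' where "T' = T \<inter> {x. \<eta> \<le> infdist x L}"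
  have "closed {x. \<eta> \<le> infdist x L}"
    by (rule closed_Collect_le) (auto intro!: continuous_intros)
  then have "compact T'" unfolding T'_def using T by blast
  show "\<forall>\<^sub>F k in sequentially. S k \<subseteq> nbhd L \<eta>"
  proof (cases "T' = {}")
    case True
    have "S k \<subseteq> nbhd L \<eta>" for k
    proof
      fix x assume "x \<in> S k"
      then have "x \<notin> T'" "x \<in> T" using True ST by auto
      then show "x \<in> nbhd L \<eta>" unfolding T'_def nbhd_def by auto
    qed
    then show ?thesis by simp
  next
    case False
    obtain p where p: "p \<in> T'" "\<And>y. y \<in> T' \<Longrightarrow> d p \<le> d y"
      using continuous_attains_inf[OF \<open>compact T'\<close> False continuous_on_subset[OF dcont]]
      unfolding T'_def by blast
    have "p \<notin> L" using p(1) \<open>\<eta> > 0\<close> unfolding T'_def by auto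
    then have "d p > 0" using dnn[of p] p(1) unfolding T'_def L_def by force
    show ?thesis
    proof (rule eventually_mono[OF unif[OF \<open>d p > 0\<close>]], intro subsetI)
      fix k x assume "\<forall>x\<in>T. \<bar>infdist x (S k) - d x\<bar> < d p" and "x \<in> S k"
      then have "d x < d p" using ST by fastforce
      then show "x \<in> nbhd L \<eta>"
        using p(2) \<open>x \<in> S k\<close> ST unfolding T'_def nbhd_def L_def by force
    qed
  qed
qed

lemma uniform_limit_infdist:
  fixes S :: "nat \<Rightarrow> 'a::metric_space set"
  assumes T: "compact T" and ST: "\<And>k. S k \<subseteq> T" and Sne: "\<And>k. S k \<noteq> {}"
    and lim: "uniform_limit T (\<lambda>k x. infdist x (S k)) d sequentially"
  shows "continuous_on T d" and "\<And>x. x \<in> T \<Longrightarrow> d x \<ge> 0"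
    and "compact {x \<in> T. d x = 0}" and "{x \<in> T. d x = 0} \<noteq> {}"
proof -
  show dcont: "continuous_on T d"
    by (rule uniform_limit_theorem[OF _ lim]) (auto intro!: always_eventually continuous_intros)
  show dnn: "d x \<ge> 0" if "x \<in> T" for x
    by (rule tendsto_lowerbound[OF tendsto_uniform_limitI[OF lim that]]) (auto simp: infdist_nonneg)
  have "closed {x \<in> T. d x = 0}"
    by (rule continuous_closed_preimage_constant[OF dcont compact_imp_closed[OF T]])
  moreover have "{x \<in> T. d x = 0} = T \<inter> {x \<in> T. d x = 0}" by blast
  ultimately show "compact {x \<in> T. d x = 0}" using compact_Int_closed[OF T] by metis
  text \<open>A minimum point of \<open>d\<close> on \<open>T\<close> is a zero: \<open>d\<close> is arbitrarily small on the sets \<open>S k\<close>.\<close>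
  have "T \<noteq> {}" using ST Sne by blast
  then obtain p where p: "p \<in> T" "\<And>y. y \<in> T \<Longrightarrow> d p \<le> d y"
    using continuous_attains_inf[OF T _ dcont] by blast
  have "d p \<le> e" if "e > 0" for e
  proof -
    obtain k where "\<forall>x\<in>T. dist (infdist x (S k)) (d x) < e"
      using lim \<open>e > 0\<close> unfolding uniform_limit_sequentially_iff by blast
    moreover obtain q where "q \<in> S k" using Sne by blast
    moreover have "q \<in> T" using \<open>q \<in> S k\<close> ST by blast
    ultimately have "d q < e" by (auto simp: dist_real_def dest!: bspec[of _ _ q])
    then show ?thesis using p(2)[OF \<open>q \<in> T\<close>] by simp
  qed
  then have "d p = 0" using dnn[OF p(1)] field_le_epsilon[of "d p" 0] by simp
  then show "{x \<in> T. d x = 0} \<noteq> {}" using p(1) by blast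
qed

text \<open>The distance functions are
  bounded and 1-Lipschitz, so Arzela--Ascoli applies.\<close>

lemma blaschke_selection:
  fixes S :: "nat \<Rightarrow> 'a::metric_space set"
  assumes T: "compact T" and ST: "\<And>k. S k \<subseteq> T" and Sne: "\<And>k. S k \<noteq> {}"
  obtains r L where "strict_mono (r :: nat \<Rightarrow> nat)" "compact L" "L \<noteq> {}" "L \<subseteq> T"
    "hausdorff_lim (S \<circ> r) L"
proof -
  obtain M where M: "\<And>x y. x \<in> T \<Longrightarrow> y \<in> T \<Longrightarrow> dist x y \<le> M"
    using compact_imp_bounded[OF T] bounded_two_points by metis
  have bound: "\<bar>infdist x (S k)\<bar> \<le> M" if "x \<in> T" for k x
  proof -
    obtain a where a: "a \<in> S k" using Sne by blast
    then have "a \<in> T" using ST by blast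
    then show ?thesis
      using infdist_le[OF a, of x] M[OF that, of a] infdist_nonneg[of x "S k"] by simp
  qed
  obtain r d where r: "strict_mono (r :: nat \<Rightarrow> nat)"
    and lim: "uniform_limit T (\<lambda>k x. infdist x (S (r k))) d sequentially"
    using equilipschitz_uniform_subsequence[OF T, of "\<lambda>k x. infdist x (S k)" M]
      bound infdist_triangle_abs by blast
  note d = uniform_limit_infdist[OF T ST Sne lim]
  have "hausdorff_lim (S \<circ> r) {x \<in> T. d x = 0}"
    unfolding o_def using hausdorff_lim_zero_set[OF T ST lim d(1,2)] .
  then show thesis using that[OF r d(3,4)] by blast
qed

lemma hausdorff_lim_approx_seq:
  assumes lim: "hausdorff_lim S L" and "x \<in> L" and Sne: "\<And>k. S k \<noteq> {}"
  obtains w where "\<And>k. w k \<in> S k" "w \<longlonglongrightarrow> x"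
proof -
  have "\<exists>w. w \<in> S k \<and> dist w x < infdist x (S k) + 1 / real (Suc k)" for k
  proof -
    have "infdist x (S k) < infdist x (S k) + 1 / real (Suc k)" by simp
    from infdist_lessE[OF Sne this] show ?thesis by (metis dist_commute)
  qed
  then obtain w where w: "\<And>k. w k \<in> S k"
    and wd: "\<And>k. dist (w k) x < infdist x (S k) + 1 / real (Suc k)" by metis
  have "w \<longlonglongrightarrow> x"
  proof (rule tendstoI)
    fix e :: real assume "e > 0"
    then have "e / 2 > 0" by simp
    from eventually_conj[OF hausdorff_limD(2)[OF lim this] eventually_inverse_Suc_less[OF this]]
    show "eventually (\<lambda>k. dist (w k) x < e) sequentially"
    proof (rule eventually_mono)
      fix k assume k: "L \<subseteq> nbhd (S k) (e / 2) \<and> 1 / real (Suc k) < e / 2"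
      then have "x \<in> nbhd (S k) (e / 2)" using \<open>x \<in> L\<close> by blast
      then have "infdist x (S k) < e / 2" unfolding nbhd_def by simp
      then show "dist (w k) x < e" using wd[of k] k by linarith
    qed
  qed
  with w that show thesis by blast
qed

lemma hausdorff_lim_limit_point:
  assumes lim: "hausdorff_lim S L" and L: "closed L" "L \<noteq> {}"
    and p: "\<And>k. p k \<in> S k" "p \<longlonglongrightarrow> x"
  shows "x \<in> L"
proof -
  have "infdist x L \<le> \<eta>" if "\<eta> > 0" for \<eta>
  proof (rule tendsto_upperbound[OF tendsto_infdist[OF p(2)]])
    show "eventually (\<lambda>k. infdist (p k) L \<le> \<eta>) sequentially"
      using hausdorff_limD(1)[OF lim that]
    proof (rule eventually_mono)
      fix k assume "S k \<subseteq> nbhd L \<eta>"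
      then have "p k \<in> nbhd L \<eta>" using p(1) by blast
      then show "infdist (p k) L \<le> \<eta>" unfolding nbhd_def by simp
    qed
  qed simp
  then have "infdist x L = 0" using infdist_nonneg[of x L] field_le_epsilon[of "infdist x L" 0] by simp
  then show ?thesis using in_closed_iff_infdist_zero[OF L] by blast
qed

lemma hausdorff_lim_fibre:
  fixes f :: "'a::metric_space \<Rightarrow> 'b::metric_space"
  assumes lim: "hausdorff_lim S L" and Sne: "\<And>k. S k \<noteq> {}"
    and f: "continuous_on UNIV f" and Sf: "\<And>k. S k \<subseteq> f -` {z k}" and z: "z \<longlonglongrightarrow> y0"
  shows "L \<subseteq> f -` {y0}"
proof
  fix x assume "x \<in> L"
  then obtain w where w: "\<And>k. w k \<in> S k" "w \<longlonglongrightarrow> x"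
    using hausdorff_lim_approx_seq[OF lim _ Sne] by blast
  have "isCont f x" using f continuous_on_eq_continuous_at[OF open_UNIV] by blast
  then have "(\<lambda>k. f (w k)) \<longlonglongrightarrow> f x" using isCont_tendsto_compose[OF _ w(2)] by blast
  moreover have "(\<lambda>k. f (w k)) = z"
  proof
    fix k show "f (w k) = z k" using w(1)[of k] Sf[of k] by blast
  qed
  ultimately have "z \<longlonglongrightarrow> f x" by simp
  then show "x \<in> f -` {y0}" using LIMSEQ_unique[OF z] by simp
qed

text \<open>A compact Hausdorff limit of connected sets is connected: a separation of the limit
  into two pieces at positive distance would separate the nearby sets \<open>S k\<close>.\<close>

lemma hausdorff_lim_connected:
  assumes lim: "hausdorff_lim S L" and L: "compact L"
    and Sconn: "\<And>k. connected (S k)" and Sne: "\<And>k. S k \<noteq> {}"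
  shows "connected L"
proof (rule ccontr)
  assume "\<not> connected L"
  then obtain A B where AB: "closed A" "closed B" "L \<subseteq> A \<union> B" "A \<inter> B \<inter> L = {}"
    "A \<inter> L \<noteq> {}" "B \<inter> L \<noteq> {}"
    unfolding connected_closed by blast
  define A' where "A' = A \<inter> L"
  define B' where "B' = B \<inter> L"
  have "compact A'" "closed B'"
    using compact_Int_closed[OF L AB(1)] compact_Int_closed[OF L AB(2)] compact_imp_closed
    unfolding A'_def B'_def by (simp_all add: Int_commute)
  have "A' \<noteq> {}" "B' \<noteq> {}" "A' \<inter> B' = {}" "L = A' \<union> B'"
    using AB unfolding A'_def B'_def by blast+
  then have "setdist A' B' > 0"
    using \<open>compact A'\<close> \<open>closed B'\<close> by (simp add: setdist_gt_0_compact_closed)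
  define \<delta> where "\<delta> = setdist A' B' / 2"
  have "\<delta> > 0" using \<open>setdist A' B' > 0\<close> by (simp add: \<delta>_def)
  have disj: "nbhd A' \<delta> \<inter> nbhd B' \<delta> = {}"
  proof (rule ccontr)
    assume "nbhd A' \<delta> \<inter> nbhd B' \<delta> \<noteq> {}"
    then obtain x where "infdist x A' < \<delta>" "infdist x B' < \<delta>" unfolding nbhd_def by blast
    then obtain a b where "a \<in> A'" "dist x a < \<delta>" "b \<in> B'" "dist x b < \<delta>"
      using infdist_lessE \<open>A' \<noteq> {}\<close> \<open>B' \<noteq> {}\<close> by metis
    moreover have "dist a b \<le> dist x a + dist x b" by (metis dist_commute dist_triangle)
    ultimately show False using setdist_le_dist[of a A' b B'] by (simp add: \<delta>_def)
  qed
  obtain k where k: "S k \<subseteq> nbhd L \<delta>" "L \<subseteq> nbhd (S k) \<delta>"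
    using eventually_happens'[OF trivial_limit_sequentially
        eventually_conj[OF hausdorff_limD[OF lim \<open>\<delta> > 0\<close>]]] by blast
  have "S k \<subseteq> nbhd A' \<delta> \<union> nbhd B' \<delta>"
    using k(1) nbhd_Un[OF \<open>A' \<noteq> {}\<close> \<open>B' \<noteq> {}\<close>] \<open>L = A' \<union> B'\<close> by simp
  moreover obtain a b where "a \<in> A'" "b \<in> B'" using \<open>A' \<noteq> {}\<close> \<open>B' \<noteq> {}\<close> by blast
  then have "S k \<inter> nbhd A' \<delta> \<noteq> {}" "S k \<inter> nbhd B' \<delta> \<noteq> {}"
    using nbhd_meets[OF _ Sne] k(2) \<open>L = A' \<union> B'\<close> by blast+
  ultimately show False
    using connectedD[OF Sconn open_nbhd open_nbhd] disj by blast
qed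

lemma diameter_le_metric:
  assumes "S \<noteq> {}" "\<And>x y. x \<in> S \<Longrightarrow> y \<in> S \<Longrightarrow> dist x y \<le> d"
  shows "diameter S \<le> d"
  using assms unfolding diameter_def by (auto intro!: cSUP_least)

lemma hausdorff_lim_diameter:
  fixes g :: "'a::metric_space \<Rightarrow> 'c::metric_space"
  assumes lim: "hausdorff_lim S L" and T: "compact T" "\<And>k. S k \<subseteq> T" "L \<subseteq> T"
    and L: "compact L" "L \<noteq> {}" and Sne: "\<And>k. S k \<noteq> {}" and g: "continuous_on T g"
    and G: "\<And>k x. x \<in> S k \<Longrightarrow> dist (G k x) (g x) < \<delta> k" and \<delta>: "\<delta> \<longlonglongrightarrow> 0"
    and diam: "\<And>k. D \<le> diameter (G k ` S k)"
  shows "D \<le> diameter (g ` L)"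
proof (rule field_le_epsilon)
  fix e :: real assume "e > 0"
  have "bounded (g ` L)"
    using compact_continuous_image[OF continuous_on_subset[OF g T(3)] L(1)] compact_imp_bounded
    by blast
  obtain d where "d > 0" and d: "\<And>x x'. x \<in> T \<Longrightarrow> x' \<in> T \<Longrightarrow> dist x' x < d \<Longrightarrow> dist (g x') (g x) < e / 4"
    using compact_uniformly_continuous[OF g T(1)] \<open>e > 0\<close> unfolding uniformly_continuous_on_def
    by (metis divide_pos_pos zero_less_numeral)
  have "e / 4 > 0" using \<open>e > 0\<close> by simp
  obtain k where k: "S k \<subseteq> nbhd L d" "\<delta> k < e / 4"
    using eventually_happens'[OF trivial_limit_sequentially eventually_conj[OF hausdorff_limD(1)[OF lim \<open>d > 0\<close>]
        order_tendstoD(2)[OF \<delta> \<open>e / 4 > 0\<close>]]] by blast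
  have near: "\<exists>a'\<in>L. dist (G k a) (g a') < e / 2" if a: "a \<in> S k" for a
  proof -
    obtain a' where a': "a' \<in> L" "dist a a' < d"
    proof (rule infdist_lessE[OF L(2)])
      show "infdist a L < d" using k(1) a unfolding nbhd_def by blast
    qed
    have "a \<in> T" "a' \<in> T" using a a'(1) T by blast+
    then have "dist (g a) (g a') < e / 4" using d[of a' a] a'(2) by (simp add: dist_commute)
    moreover have "dist (G k a) (g a) < e / 4" using G[OF a] k(2) by linarith
    ultimately have "dist (G k a) (g a') < e / 2"
      using dist_triangle[of "G k a" "g a'" "g a"] by linarith
    then show ?thesis using a'(1) by blast
  qed
  have "diameter (G k ` S k) \<le> diameter (g ` L) + e"
  proof (rule diameter_le_metric)
    fix u v assume "u \<in> G k ` S k" "v \<in> G k ` S k"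
    then obtain a b where "a \<in> S k" "b \<in> S k" "u = G k a" "v = G k b" by blast
    then obtain a' b' where "a' \<in> L" "b' \<in> L" "dist u (g a') < e / 2" "dist v (g b') < e / 2"
      using near by blast
    moreover have "dist (g a') (g b') \<le> diameter (g ` L)"
      using diameter_bounded_bound[OF \<open>bounded (g ` L)\<close>] \<open>a' \<in> L\<close> \<open>b' \<in> L\<close> by blast
    ultimately show "dist u v \<le> diameter (g ` L) + e"
      using dist_triangle[of u v "g a'"] dist_triangle[of "g a'" v "g b'"] dist_commute[of v "g b'"]
      by linarith
  qed (use Sne in blast)
  then show "D \<le> diameter (g ` L) + e" using diam[of k] by linarith
qed

text \<open>The preimage under a perfect map of a convergent sequence together with its limit is
  compact; all sets in the main argument live in such a preimage.\<close>

lemma perfect_map_compact_preimage: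
  fixes f :: "'a::metric_space \<Rightarrow> 'b::metric_space"
  assumes pf: "perfect_map f" and lim: "z \<longlonglongrightarrow> y0"
  shows "compact (f -` insert y0 (range z))"
proof -
  have K: "compactin euclidean (insert y0 (range z))"
    using compactin_sequence_with_limit[of euclidean z y0 "range z"] lim by simp
  have pm: "proper_map euclidean euclidean f"
    using pf unfolding proper_map_def closed_map_def perfect_map_def
    by (auto simp: closed_closedin[symmetric] vimage_def)
  have "compactin euclidean {x. x \<in> topspace euclidean \<and> f x \<in> insert y0 (range z)}"
    by (rule compactin_proper_map_preimage[OF pm K])
  then show ?thesis by (simp add: vimage_def)
qed

lemma comp_fib_basic:
  fixes f :: "'a::metric_space \<Rightarrow> 'b::metric_space" and g :: "'a \<Rightarrow> 'c::metric_space"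
  assumes "f x = y"
  shows "x \<in> comp_fib x g f y" "connected (comp_fib x g f y)"
    and "comp_fib x g f y \<subseteq> g -` {g x} \<inter> f -` {y}"
proof -
  show "x \<in> comp_fib x g f y" using assms by (simp add: comp_fib_def)
  show "connected (comp_fib x g f y)" unfolding comp_fib_def by simp
  show "comp_fib x g f y \<subseteq> g -` {g x} \<inter> f -` {y}"
    unfolding comp_fib_def by (rule connected_component_subset)
qed

lemma comp_fib_compact:
  fixes f :: "'a::metric_space \<Rightarrow> 'b::metric_space" and g :: "'a \<Rightarrow> 'c::metric_space"
  assumes f: "continuous_on UNIV f" and g: "continuous_on UNIV g" and fib: "compact (f -` {y})"
  shows "compact (comp_fib x g f y)"
proof -
  have "closed (g -` {g x})" "closed (f -` {y})"
    using continuous_closed_vimage f g continuous_on_eq_continuous_at[OF open_UNIV] closed_singleton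
    by blast+
  then have "closed (comp_fib x g f y)"
    unfolding comp_fib_def by (intro closed_connected_component closed_Int)
  moreover have "comp_fib x g f y \<subseteq> f -` {y}"
    unfolding comp_fib_def using connected_component_subset by blast
  ultimately show ?thesis
    using compact_Int_closed[OF fib] by (metis inf.absorb_iff2)
qed

lemma same_limit_of_close_sequences:
  fixes a b :: "nat \<Rightarrow> 'a::metric_space"
  assumes "a \<longlonglongrightarrow> \<alpha>" "b \<longlonglongrightarrow> \<beta>" "\<And>k. dist (a k) (b k) \<le> \<epsilon> k" "\<epsilon> \<longlonglongrightarrow> 0"
  shows "\<alpha> = \<beta>"
proof -
  have "dist \<alpha> \<beta> \<le> 0"
    using tendsto_le[OF trivial_limit_sequentially assms(4) tendsto_dist[OF assms(1,2)]] assms(3)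
    by simp
  then show ?thesis by simp
qed

lemma hausdorff_lim_level_set:
  fixes g :: "'a::metric_space \<Rightarrow> 'c::metric_space"
  assumes lim: "hausdorff_lim S C" and Sne: "\<And>k. S k \<noteq> {}" and g: "continuous_on UNIV g"
    and p: "\<And>k. p k \<in> S k" "p \<longlonglongrightarrow> x"
    and const: "\<And>k w. w \<in> S k \<Longrightarrow> G k w = G k (p k)"
    and close: "\<And>k w. w \<in> S k \<Longrightarrow> dist (G k w) (g w) < \<delta> k" and \<delta>: "\<delta> \<longlonglongrightarrow> 0"
  shows "C \<subseteq> g -` {g x}"
proof
  fix c assume "c \<in> C"
  then obtain w where w: "\<And>k. w k \<in> S k" "w \<longlonglongrightarrow> c"
    using hausdorff_lim_approx_seq[OF lim _ Sne] by blast
  have bound: "dist (g (w k)) (g (p k)) \<le> 2 * \<delta> k" for k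
  proof -
    have "dist (g (w k)) (g (p k)) \<le> dist (G k (w k)) (g (w k)) + dist (G k (p k)) (g (p k))"
      using dist_triangle3[of "g (w k)" "g (p k)" "G k (w k)"] const[OF w(1)[of k]]
      by (simp add: dist_commute)
    then show ?thesis using close[OF w(1)[of k]] close[OF p(1)[of k]] by linarith
  qed
  have gc: "isCont g y" for y using g continuous_on_eq_continuous_at[OF open_UNIV] by blast
  have "(\<lambda>k. 2 * \<delta> k) \<longlonglongrightarrow> 0" using tendsto_mult_right_zero[OF \<delta>] .
  then have "g c = g x"
    using same_limit_of_close_sequences[OF isCont_tendsto_compose[OF gc w(2)]
        isCont_tendsto_compose[OF gc p(2)] bound] by blast
  then show "c \<in> g -` {g x}" by simp
qed

lemma comp_fib_limit:
  fixes f :: "'a::metric_space \<Rightarrow> 'b::metric_space" and g :: "'a \<Rightarrow> 'c::metric_space"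
  assumes T: "compact T" "\<And>k. f -` {z k} \<subseteq> T"
    and f: "continuous_on UNIV f" and g: "continuous_on UNIV g"
    and close: "\<And>k x. f x = z k \<Longrightarrow> dist (G k x) (g x) < \<delta> k" and \<delta>: "\<delta> \<longlonglongrightarrow> 0"
    and z: "z \<longlonglongrightarrow> y0" and xs: "\<And>k. f (xs k) = z k" "xs \<longlonglongrightarrow> x"
  obtains r C where "strict_mono (r :: nat \<Rightarrow> nat)" "compact C" "C \<noteq> {}"
    "x \<in> C" "C \<subseteq> comp_fib x g f y0"
    "hausdorff_lim (\<lambda>k. comp_fib (xs (r k)) (G (r k)) f (z (r k))) C"
proof -
  define CC where "CC k = comp_fib (xs k) (G k) f (z k)" for k
  have CC: "xs k \<in> CC k" "connected (CC k)" "CC k \<subseteq> G k -` {G k (xs k)} \<inter> f -` {z k}" for k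
    unfolding CC_def using comp_fib_basic[where f=f and x="xs k" and g="G k", OF xs(1)] by blast+
  have CCT: "CC k \<subseteq> T" for k using CC(3)[of k] T(2)[of k] by blast
  have CCne: "CC k \<noteq> {}" for k using CC(1)[of k] by blast
  obtain r C where r: "strict_mono r" and C: "compact C" "C \<noteq> {}" "C \<subseteq> T"
    and lim: "hausdorff_lim (CC \<circ> r) C"
    by (rule blaschke_selection[OF T(1) CCT CCne])
  have ne: "(CC \<circ> r) k \<noteq> {}" and fibre: "(CC \<circ> r) k \<subseteq> f -` {(z \<circ> r) k}" for k
    using CCne CC(3)[of "r k"] by auto
  have xsr: "(xs \<circ> r) \<longlonglongrightarrow> x" using LIMSEQ_subseq_LIMSEQ[OF xs(2) r] .
  have "x \<in> C"
    using hausdorff_lim_limit_point[OF lim compact_imp_closed[OF C(1)] C(2), of "xs \<circ> r"] CC(1) xsr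
    by simp
  have "connected C"
    using hausdorff_lim_connected[OF lim C(1)] CC(2) ne by simp
  have "C \<subseteq> f -` {y0}"
    using hausdorff_lim_fibre[OF lim ne f fibre LIMSEQ_subseq_LIMSEQ[OF z r]] .
  moreover have "C \<subseteq> g -` {g x}"
  proof (rule hausdorff_lim_level_set[OF lim ne g _ xsr])
    show "(xs \<circ> r) k \<in> (CC \<circ> r) k" for k using CC(1) by simp
    show "(G \<circ> r) k w = (G \<circ> r) k ((xs \<circ> r) k)" if "w \<in> (CC \<circ> r) k" for k w
      using that CC(3)[of "r k"] by auto
    show "dist ((G \<circ> r) k w) (g w) < (\<delta> \<circ> r) k" if "w \<in> (CC \<circ> r) k" for k w
      using that CC(3)[of "r k"] close by auto
  qed (rule LIMSEQ_subseq_LIMSEQ[OF \<delta> r])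
  ultimately have "C \<subseteq> comp_fib x g f y0"
    unfolding comp_fib_def by (intro connected_component_maximal \<open>x \<in> C\<close> \<open>connected C\<close>) auto
  moreover have "hausdorff_lim (\<lambda>k. comp_fib (xs (r k)) (G (r k)) f (z (r k))) C"
    using lim unfolding CC_def o_def .
  ultimately show thesis using that[OF r C(1,2) \<open>x \<in> C\<close>] by blast
qed

lemma bad_continua_limit:
  fixes f :: "'a::metric_space \<Rightarrow> 'b::metric_space" and g :: "'a \<Rightarrow> 'c::metric_space"
  assumes pf: "perfect_map f" and g: "continuous_on UNIV g" and z: "z \<longlonglongrightarrow> y0"
    and close: "\<And>k x. f x = z k \<Longrightarrow> dist (G k x) (g x) < \<delta> k" and \<delta>: "\<delta> \<longlonglongrightarrow> 0"
    and LL: "\<And>k. subcontinuum (LL k)" "\<And>k. LL k \<subseteq> f -` {z k}"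
      "\<And>k. D \<le> diameter (G k ` LL k)"
  obtains r L where "strict_mono (r :: nat \<Rightarrow> nat)" "subcontinuum L" "L \<subseteq> f -` {y0}"
    "D \<le> diameter (g ` L)" "hausdorff_lim (LL \<circ> r) L"
proof -
  define T where "T = f -` insert y0 (range z)"
  have "compact T" unfolding T_def by (rule perfect_map_compact_preimage[OF pf z])
  moreover have "LL k \<subseteq> T" for k using LL(2)[of k] unfolding T_def by auto
  ultimately have T: "compact T" "\<And>k. LL k \<subseteq> T" by auto
  have LLne: "LL k \<noteq> {}" for k using LL(1) unfolding subcontinuum_def by blast
  obtain r L where r: "strict_mono r" and L: "compact L" "L \<noteq> {}" "L \<subseteq> T"
    and lim: "hausdorff_lim (LL \<circ> r) L"
    by (rule blaschke_selection[OF T LLne])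
  have "connected L"
    using hausdorff_lim_connected[OF lim L(1)] LL(1) LLne unfolding subcontinuum_def by simp
  have f: "continuous_on UNIV f" using pf by (simp add: perfect_map_def)
  have "L \<subseteq> f -` {y0}"
    using hausdorff_lim_fibre[OF lim _ f _ LIMSEQ_subseq_LIMSEQ[OF z r]] LLne LL(2) by simp
  have "D \<le> diameter (g ` L)"
  proof (rule hausdorff_lim_diameter[OF lim T(1) _ L(3) L(1,2) _ continuous_on_subset[OF g]])
    show "dist ((G \<circ> r) k x) (g x) < (\<delta> \<circ> r) k" if "x \<in> (LL \<circ> r) k" for k x
      using close[of x "r k"] LL(2)[of "r k"] that by auto
  qed (use T LLne LL(3) LIMSEQ_subseq_LIMSEQ[OF \<delta> r] in \<open>auto simp: o_def\<close>)
  moreover have "subcontinuum L" using L \<open>connected L\<close> unfolding subcontinuum_def by blast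
  ultimately show thesis using that[OF r _ \<open>L \<subseteq> f -` {y0}\<close> _ lim] by blast
qed

lemma components_eventually_near:
  fixes f :: "'a::metric_space \<Rightarrow> 'b::metric_space" and g :: "'a \<Rightarrow> 'c::metric_space"
  assumes pf: "perfect_map f" and g: "continuous_on UNIV g" and z: "z \<longlonglongrightarrow> y0"
    and close: "\<And>k x. f x = z k \<Longrightarrow> dist (G k x) (g x) < \<delta> k" and \<delta>: "\<delta> \<longlonglongrightarrow> 0"
    and LL: "\<And>k. LL k \<subseteq> f -` {z k}" "\<And>k. LL k \<noteq> {}" and lim: "hausdorff_lim LL L"
    and "x \<in> L" and near: "comp_fib x g f y0 \<subseteq> nbhd L \<rho>" and "\<rho> < \<mu>"
  shows "\<exists>k. \<exists>x'\<in>LL k. comp_fib x' (G k) f (z k) \<subseteq> nbhd (LL k) \<mu>"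
proof -
  have f: "continuous_on UNIV f" using pf by (simp add: perfect_map_def)
  obtain xs where xs: "\<And>k. xs k \<in> LL k" "xs \<longlonglongrightarrow> x"
    using hausdorff_lim_approx_seq[OF lim \<open>x \<in> L\<close> LL(2)] by blast
  define T where "T = f -` insert y0 (range z)"
  have T: "compact T" "\<And>k. f -` {z k} \<subseteq> T"
    using perfect_map_compact_preimage[OF pf z] unfolding T_def by auto
  have xsf: "f (xs k) = z k" for k using xs(1) LL(1) by blast
  text \<open>Along a subsequence the components through \<open>xs k\<close> converge to a set \<open>C\<close> inside the
    component through \<open>x\<close>; the Hausdorff convergences then chain the neighbourhoods.\<close>
  obtain r C where r: "strict_mono r" and C: "compact C" "C \<noteq> {}" "x \<in> C" "C \<subseteq> comp_fib x g f y0"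
    and limC: "hausdorff_lim (\<lambda>k. comp_fib (xs (r k)) (G (r k)) f (z (r k))) C"
    by (rule comp_fib_limit[OF T f g close \<delta> z xsf xs(2)])
  define \<eta> where "\<eta> = (\<mu> - \<rho>) / 2"
  have "\<eta> > 0" using \<open>\<rho> < \<mu>\<close> by (simp add: \<eta>_def)
  obtain k where k: "comp_fib (xs (r k)) (G (r k)) f (z (r k)) \<subseteq> nbhd C \<eta>"
      "L \<subseteq> nbhd (LL (r k)) \<eta>"
    using eventually_happens'[OF trivial_limit_sequentially eventually_conj[OF
          hausdorff_limD(1)[OF limC \<open>\<eta> > 0\<close>] hausdorff_limD(2)[OF hausdorff_lim_subseq[OF lim r] \<open>\<eta> > 0\<close>]]]
    by auto
  have "L \<noteq> {}" using \<open>x \<in> L\<close> by blast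
  then have "C \<subseteq> nbhd (LL (r k)) (\<eta> + \<rho>)"
    using C(4) near nbhd_trans[OF k(2)] by blast
  then have "nbhd C \<eta> \<subseteq> nbhd (LL (r k)) (\<eta> + \<rho> + \<eta>)"
    using nbhd_trans[OF _ C(2)] by blast
  moreover have "\<eta> + \<rho> + \<eta> = \<mu>" by (simp add: \<eta>_def)
  ultimately have "comp_fib (xs (r k)) (G (r k)) f (z (r k)) \<subseteq> nbhd (LL (r k)) \<mu>"
    using k(1) by auto
  then show ?thesis using xs(1) by blast
qed

lemma Kset_along_sequence:
  fixes f :: "'a::metric_space \<Rightarrow> 'b::metric_space" and g :: "'a \<Rightarrow> 'c::metric_space"
  assumes pf: "perfect_map f" and gK: "g \<in> Kset f m n y0" and z: "z \<longlonglongrightarrow> y0"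
    and G: "\<And>k. G k \<in> cmaps"
    and close: "\<And>k x. f x = z k \<Longrightarrow> dist (G k x) (g x) < \<delta> k" and \<delta>: "\<delta> \<longlonglongrightarrow> 0"
  shows "\<exists>k. G k \<in> Kset f m n (z k)"
proof (rule ccontr)
  assume "\<not> ?thesis"
  then have bad: "G k \<notin> Kset f m n (z k)" for k by blast
  have "\<exists>L. subcontinuum L \<and> L \<subseteq> f -` {z k} \<and> 1 / real n \<le> diameter (G k ` L) \<and>
      (\<forall>x\<in>L. \<not> comp_fib x (G k) f (z k) \<subseteq> nbhd L (1 / real m))" for k
    using bad[of k] G[of k] unfolding Kset_def by blast
  then obtain LL where LL: "\<And>k. subcontinuum (LL k)" "\<And>k. LL k \<subseteq> f -` {z k}"
      "\<And>k. 1 / real n \<le> diameter (G k ` LL k)"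
    and far: "\<And>k x. x \<in> LL k \<Longrightarrow> \<not> comp_fib x (G k) f (z k) \<subseteq> nbhd (LL k) (1 / real m)"
    by metis
  have f: "continuous_on UNIV f" using pf by (simp add: perfect_map_def)
  have g: "continuous_on UNIV g" using gK by (simp add: Kset_def cmaps_def)
  obtain r L where r: "strict_mono r" and L: "subcontinuum L" "L \<subseteq> f -` {y0}"
      "1 / real n \<le> diameter (g ` L)" and lim: "hausdorff_lim (LL \<circ> r) L"
    by (rule bad_continua_limit[OF pf g z close \<delta> LL])
  then obtain x where "x \<in> L" and x: "comp_fib x g f y0 \<subseteq> nbhd L (1 / real m)"
    using gK unfolding Kset_def by blast
  have "compact (comp_fib x g f y0)" using comp_fib_compact[OF f g] pf by (simp add: perfect_map_def)
  then obtain \<rho> where \<rho>: "\<rho> < 1 / real m" "comp_fib x g f y0 \<subseteq> nbhd L \<rho>"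
    using compact_nbhd_margin[OF _ x] by blast
  have "\<exists>k. \<exists>x'\<in>(LL \<circ> r) k. comp_fib x' ((G \<circ> r) k) f ((z \<circ> r) k) \<subseteq> nbhd ((LL \<circ> r) k) (1 / real m)"
  proof (rule components_eventually_near[OF pf g _ _ _ _ _ lim \<open>x \<in> L\<close> \<rho>(2,1)])
    show "(z \<circ> r) \<longlonglongrightarrow> y0" "(\<delta> \<circ> r) \<longlonglongrightarrow> 0"
      using LIMSEQ_subseq_LIMSEQ[OF z r] LIMSEQ_subseq_LIMSEQ[OF \<delta> r] .
    show "dist ((G \<circ> r) k x) (g x) < (\<delta> \<circ> r) k" if "f x = (z \<circ> r) k" for k x
      using close that by simp
    show "(LL \<circ> r) k \<subseteq> f -` {(z \<circ> r) k}" "(LL \<circ> r) k \<noteq> {}" for k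
      using LL(1,2) unfolding subcontinuum_def by auto
  qed
  then show False using far by auto
qed

definition Kstable :: "('a::metric_space \<Rightarrow> 'b) \<Rightarrow> ('a \<Rightarrow> 'c::metric_space) \<Rightarrow> nat \<Rightarrow> nat \<Rightarrow> 'b \<Rightarrow> real \<Rightarrow> bool" where
  "Kstable f g m n z t \<longleftrightarrow>
     (\<forall>g'\<in>cmaps. (\<forall>x. f x = z \<longrightarrow> dist (g' x) (g x) < t) \<longrightarrow> g' \<in> Kset f m n z)"

lemma Kstable_mono: "Kstable f g m n z t \<Longrightarrow> t' \<le> t \<Longrightarrow> Kstable f g m n z t'"
  unfolding Kstable_def by (meson less_le_trans)

text \<open>Otherwise a sequence of counterexamples contradicts the sequential form.\<close>

lemma Kstable_near:
  fixes f :: "'a::metric_space \<Rightarrow> 'b::metric_space" and g :: "'a \<Rightarrow> 'c::metric_space"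
  assumes pf: "perfect_map f" and gK: "g \<in> Kset f m n y0"
  shows "\<exists>t>0. \<forall>z. dist z y0 < t \<longrightarrow> Kstable f g m n z t"
proof (rule ccontr)
  assume contra: "\<not> ?thesis"
  have ex_z: "\<forall>k. \<exists>z. dist z y0 < 1 / real (Suc k) \<and> \<not> Kstable f g m n z (1 / real (Suc k))"
  proof
    fix k
    have "1 / real (Suc k) > 0" by simp
    with contra show "\<exists>z. dist z y0 < 1 / real (Suc k) \<and> \<not> Kstable f g m n z (1 / real (Suc k))"
      by blast
  qed
  obtain z where z: "\<And>k. dist (z k) y0 < 1 / real (Suc k)"
    and unstable: "\<And>k. \<not> Kstable f g m n (z k) (1 / real (Suc k))"
    using choice[OF ex_z] by blast
  have ex_G: "\<forall>k. \<exists>g'. g' \<in> cmaps \<and> (\<forall>x. f x = z k \<longrightarrow> dist (g' x) (g x) < 1 / real (Suc k))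
      \<and> g' \<notin> Kset f m n (z k)"
  proof
    fix k
    show "\<exists>g'. g' \<in> cmaps \<and> (\<forall>x. f x = z k \<longrightarrow> dist (g' x) (g x) < 1 / real (Suc k))
      \<and> g' \<notin> Kset f m n (z k)"
      using unstable[of k] by (simp add: Kstable_def Bex_def)
  qed
  obtain G where G: "\<And>k. G k \<in> cmaps"
    and close: "\<And>k x. f x = z k \<Longrightarrow> dist (G k x) (g x) < 1 / real (Suc k)"
    and bad: "\<And>k. G k \<notin> Kset f m n (z k)"
    using choice[OF ex_G] by blast
  have \<delta>: "(\<lambda>k. 1 / real (Suc k)) \<longlonglongrightarrow> 0"
    using LIMSEQ_inverse_real_of_nat by (simp add: inverse_eq_divide)
  have "\<forall>\<^sub>F k in sequentially. 0 \<le> dist (z k) y0" by (intro always_eventually allI) simp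
  moreover have "\<forall>\<^sub>F k in sequentially. dist (z k) y0 \<le> 1 / real (Suc k)"
    by (intro always_eventually allI less_imp_le z)
  ultimately have "(\<lambda>k. dist (z k) y0) \<longlonglongrightarrow> 0" by (rule tendsto_sandwich[OF _ _ tendsto_const \<delta>])
  then have "z \<longlonglongrightarrow> y0" by (rule tendsto_dist_iff[THEN iffD2])
  then obtain k where "G k \<in> Kset f m n (z k)" using Kset_along_sequence[OF pf gK _ G close \<delta>] by blast
  then show False using bad by blast
qed

definition downward_closed :: "('b \<Rightarrow> real \<Rightarrow> bool) \<Rightarrow> bool" where
  "downward_closed P \<longleftrightarrow> (\<forall>y t t'. P y t \<longrightarrow> 0 < t' \<longrightarrow> t' \<le> t \<longrightarrow> P y t')"

definition admissible_radius :: "('b::metric_space \<Rightarrow> real \<Rightarrow> bool) \<Rightarrow> 'b \<Rightarrow> real \<Rightarrow> bool" where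
  "admissible_radius P y t \<longleftrightarrow> 0 < t \<and> t \<le> 1 \<and> (\<forall>z. dist z y < t \<longrightarrow> P z t)"

definition largest_radius :: "('b::metric_space \<Rightarrow> real \<Rightarrow> bool) \<Rightarrow> 'b \<Rightarrow> real" where
  "largest_radius P y = Sup {t. admissible_radius P y t}"

lemma admissible_radius_shift:
  assumes mono: "downward_closed P"
    and adm: "admissible_radius P y t" and "dist y y' < t"
  shows "admissible_radius P y' (t - dist y y')"
  unfolding admissible_radius_def
proof (intro conjI allI impI)
  show "0 < t - dist y y'" using \<open>dist y y' < t\<close> by simp
  show "t - dist y y' \<le> 1" using adm zero_le_dist[of y y'] unfolding admissible_radius_def by linarith
  fix z assume "dist z y' < t - dist y y'"
  then have "dist z y < t" using dist_triangle[of z y y'] by (simp add: dist_commute)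
  then have "P z t" using adm unfolding admissible_radius_def by blast
  then show "P z (t - dist y y')" using mono \<open>0 < t - dist y y'\<close> unfolding downward_closed_def by simp
qed

lemma largest_radius:
  assumes mono: "downward_closed P"
    and local: "\<And>y. \<exists>t>0. \<forall>z. dist z y < t \<longrightarrow> P z t"
  shows "0 < largest_radius P y" and "largest_radius P y \<le> 1"
    and "largest_radius P y \<le> largest_radius P y' + dist y y'"
    and "P y (largest_radius P y / 2)"
proof -
  have ex: "\<exists>t. admissible_radius P y t" for y
  proof -
    obtain t where "t > 0" "\<forall>z. dist z y < t \<longrightarrow> P z t" using local by blast
    then show ?thesis using mono unfolding admissible_radius_def downward_closed_def
      by (intro exI[of _ "min t 1"]) auto
  qed
  have bdd: "bdd_above {t. admissible_radius P y t}" for y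
    unfolding admissible_radius_def by (intro bdd_aboveI[of _ 1]) auto
  have ge: "admissible_radius P y t \<Longrightarrow> t \<le> largest_radius P y" for y t
    unfolding largest_radius_def using bdd by (intro cSup_upper) auto
  show "largest_radius P y \<le> 1" unfolding largest_radius_def
    using ex by (intro cSup_least) (auto simp: admissible_radius_def)
  show pos: "0 < largest_radius P y" for y
    using ex ge unfolding admissible_radius_def by (meson less_le_trans)
  show "largest_radius P y \<le> largest_radius P y' + dist y y'"
    unfolding largest_radius_def[of P y]
  proof (rule cSup_least)
    show "{t. admissible_radius P y t} \<noteq> {}" using ex by blast
    fix t assume "t \<in> {t. admissible_radius P y t}"
    then have adm: "admissible_radius P y t" by simp
    show "t \<le> largest_radius P y' + dist y y'"
    proof (cases "dist y y' < t")
      case True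
      then show ?thesis using ge[OF admissible_radius_shift[OF mono adm True]] by simp
    next
      case False
      then show ?thesis using pos[of y'] by simp
    qed
  qed
  have "largest_radius P y / 2 < Sup {t. admissible_radius P y t}"
    using pos[of y] unfolding largest_radius_def by simp
  then obtain t where t: "admissible_radius P y t" "largest_radius P y / 2 < t"
    using less_cSup_iff[OF _ bdd] ex by blast
  then have "P y t" unfolding admissible_radius_def by simp
  then show "P y (largest_radius P y / 2)"
    using mono pos[of y] t(2) unfolding downward_closed_def by simp
qed

lemma continuous_radius:
  fixes P :: "'b::metric_space \<Rightarrow> real \<Rightarrow> bool"
  assumes mono: "downward_closed P"
    and local: "\<And>y. \<exists>t>0. \<forall>z. dist z y < t \<longrightarrow> P z t"
  obtains \<epsilon> where "continuous_on UNIV \<epsilon>" "\<And>y. 0 < \<epsilon> y" "\<And>y. \<epsilon> y \<le> 1" "\<And>y. P y (\<epsilon> y)"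
proof -
  note \<psi> = largest_radius[OF mono local]
  have "1-lipschitz_on UNIV (largest_radius P)"
  proof (rule lipschitz_onI)
    fix y y' :: 'b
    show "dist (largest_radius P y) (largest_radius P y') \<le> 1 * dist y y'"
      using \<psi>(3)[of y y'] \<psi>(3)[of y' y] by (simp add: dist_real_def dist_commute abs_le_iff)
  qed simp
  then have "continuous_on UNIV (largest_radius P)" by (rule lipschitz_on_continuous_on)
  then have "continuous_on UNIV (\<lambda>y. largest_radius P y / 2)"
    by (rule continuous_on_divide[OF _ continuous_on_const]) auto
  moreover have "0 < largest_radius P y / 2" "largest_radius P y / 2 \<le> 1" for y
    using \<psi>(1,2)[of y] by simp_all
  ultimately show thesis using that \<psi>(4) by blast
qed

text \<open>A map in \<open>K(m,n,H)\<close> is stable at every point of \<open>H\<close> for a continuous radius \<open>\<epsilon>\<close>;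
  closedness of \<open>H\<close> makes the condition vacuous near points outside \<open>H\<close>.\<close>

lemma KsetH_stable_radius:
  fixes f :: "'a::metric_space \<Rightarrow> 'b::metric_space" and g :: "'a \<Rightarrow> 'c::metric_space"
  assumes pf: "perfect_map f" and H: "closed H" and gK: "g \<in> KsetH f m n H"
  obtains \<epsilon> where "continuous_on UNIV \<epsilon>" "\<And>y. 0 < \<epsilon> y" "\<And>y. \<epsilon> y \<le> 1"
    "\<And>y. y \<in> H \<Longrightarrow> Kstable f g m n y (\<epsilon> y)"
proof -
  have local: "\<exists>t>0. \<forall>z. dist z y < t \<longrightarrow> z \<in> H \<longrightarrow> Kstable f g m n z t" for y
  proof (cases "y \<in> H")
    case True
    then have "g \<in> Kset f m n y" using gK unfolding KsetH_def by blast
    then show ?thesis using Kstable_near[OF pf] by blast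
  next
    case False
    have "open (- H)" using H by (simp add: open_Compl)
    then obtain t where "t > 0" "ball y t \<subseteq> - H" using False open_contains_ball by blast
    moreover have "z \<notin> H" if "dist z y < t" for z
      using that \<open>ball y t \<subseteq> - H\<close> by (auto simp: dist_commute)
    ultimately show ?thesis by blast
  qed
  have mono: "downward_closed (\<lambda>y t. y \<in> H \<longrightarrow> Kstable f g m n y t)"
    unfolding downward_closed_def by (meson Kstable_mono)
  have "\<exists>\<epsilon>. continuous_on UNIV \<epsilon> \<and> (\<forall>y. 0 < \<epsilon> y) \<and> (\<forall>y. \<epsilon> y \<le> 1) \<and>
      (\<forall>y. y \<in> H \<longrightarrow> Kstable f g m n y (\<epsilon> y))"
    by (rule continuous_radius[of "\<lambda>y t. y \<in> H \<longrightarrow> Kstable f g m n y t"]) (use mono local in auto)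
  then show thesis using that by blast
qed

lemma sl_ball_subset_KsetH:
  fixes f :: "'a::metric_space \<Rightarrow> 'b::metric_space" and g :: "'a \<Rightarrow> 'c::metric_space"
  assumes "\<And>y. y \<in> H \<Longrightarrow> Kstable f g m n y (\<epsilon> y)"
  shows "sl_ball g (\<lambda>x. \<epsilon> (f x)) \<subseteq> KsetH f m n H"
proof
  fix g' assume "g' \<in> sl_ball g (\<lambda>x. \<epsilon> (f x))"
  then have g': "g' \<in> cmaps" "\<And>x. dist (g' x) (g x) < \<epsilon> (f x)" unfolding sl_ball_def by auto
  have "g' \<in> Kset f m n y" if "y \<in> H" for y
    using assms[OF that] g' unfolding Kstable_def by auto
  then show "g' \<in> KsetH f m n H" using g'(1) unfolding KsetH_def by blast
qed

theorem proposition2p4: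
  fixes f :: "'a::metric_space \<Rightarrow> 'b::metric_space"
    and H :: "'b set" and m n :: nat
  assumes "perfect_map f"
    and "closed H"
    and "m \<ge> 1" and "n \<ge> 1"
  shows "openin (source_limitation_topology :: ('a \<Rightarrow> 'c::complete_space) topology) (KsetH f m n H)"
  unfolding source_limitation_topology_def openin_subopen[of _ "KsetH f m n H"]
proof
  fix g :: "'a \<Rightarrow> 'c" assume gK: "g \<in> KsetH f m n H"
  obtain \<epsilon> where \<epsilon>: "continuous_on UNIV \<epsilon>" "\<And>y. 0 < \<epsilon> y" "\<And>y. \<epsilon> y \<le> 1"
    and stable: "\<And>y. y \<in> H \<Longrightarrow> Kstable f g m n y (\<epsilon> y)"
    using KsetH_stable_radius[OF assms(1,2) gK] by blast
  have "g \<in> cmaps" using gK unfolding KsetH_def by blast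
  moreover have "continuous_on UNIV (\<lambda>x. \<epsilon> (f x))"
  proof (rule continuous_on_compose2[OF \<epsilon>(1) _ subset_UNIV])
    show "continuous_on UNIV f" using assms(1) by (simp add: perfect_map_def)
  qed
  ultimately have basic: "sl_ball g (\<lambda>x. \<epsilon> (f x)) \<in> {sl_ball g \<epsilon> | g \<epsilon>. g \<in> cmaps \<and>
      continuous_on UNIV \<epsilon> \<and> (\<forall>x. 0 < \<epsilon> x \<and> \<epsilon> x \<le> 1)}"
    using \<epsilon>(2,3) by blast
  have "g \<in> sl_ball g (\<lambda>x. \<epsilon> (f x))"
    using \<open>g \<in> cmaps\<close> \<epsilon>(2) unfolding sl_ball_def by simp
  then show "\<exists>T. openin (topology_generated_by {sl_ball g \<epsilon> | g \<epsilon>. g \<in> cmaps \<and>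
      continuous_on UNIV \<epsilon> \<and> (\<forall>x. 0 < \<epsilon> x \<and> \<epsilon> x \<le> 1)}) T \<and> g \<in> T \<and> T \<subseteq> KsetH f m n H"
    using topology_generated_by_Basis[OF basic] sl_ball_subset_KsetH[OF stable] by blast
qed

end
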